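(* Let $G$ be a profinite group, $\{G_\alpha\}_{\alpha\le\mu}$ a composition series of $G$, $S$ a finite simple group, and $\mathcal S_1=\{\alpha<\mu: G_\alpha/G_{\alpha+1}\cong S\}$. For each finite topological quotient $A$ of $G$ let $n_{S,A}$ be the number of composition factors isomorphic to $S$ in a composition series of the finite group $A$. Then for every natural number $n$: $|\mathcal S_1|=n$ if and only if the set $\{n_{S,A} : A \text{ a finite topological quotient of } G\}$ has maximum equal to $n$.
   Context: All subgroups of profinite groups are closed and all quotients are topological quotients. An accessible series from $G$ to $\{e\}$ over an ordinal $\mu$ is a family of closed subgroups $G=G_0\ge\cdots\ge G_\lambda\ge\cdots\ge G_\mu=\{e\}$ with $G_{\alpha+1}\trianglelefteq G_\alpha$ for all $\alpha<\mu$ and $G_\alpha=\bigcap_{\beta<\alpha}G_\beta$ for all limit $\alpha\le\mu$. A composition series for $G$ is such a series with $G_\lambda/G_{\lambda+1}$ finite simple nontrivial for all $\lambda<\mu$. *)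

theory Defs
  imports "HOL-Analysis.Analysis" "HOL-Algebra.SimpleGroups" "HOL-Algebra.Coset"
begin

definition topological_group :: "'a monoid \<Rightarrow> 'a topology \<Rightarrow> bool" where
  "topological_group G T \<longleftrightarrow> group G \<and> topspace T = carrier G \<and>
     continuous_map (prod_topology T T) T (\<lambda>(x, y). x \<otimes>\<^bsub>G\<^esub> y) \<and>
     continuous_map T T (\<lambda>x. inv\<^bsub>G\<^esub> x)"

definition totally_disconnected_space :: "'a topology \<Rightarrow> bool" where
  "totally_disconnected_space T \<longleftrightarrow>
     (\<forall>S. S \<subseteq> topspace T \<and> connectedin T S \<longrightarrow> (\<exists>a. S \<subseteq> {a}))"

definition profinite_group :: "'a monoid \<Rightarrow> 'a topology \<Rightarrow> bool" where
  "profinite_group G T \<longleftrightarrow> topological_group G T \<and> compact_space T \<and>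
     Hausdorff_space T \<and> totally_disconnected_space T"

(* Ordinals up to mu are modelled by the initial segment {..mu} of a well-ordered type. *)
definition osucc :: "'i::wellorder \<Rightarrow> 'i" where
  "osucc \<alpha> = (LEAST \<beta>. \<alpha> < \<beta>)"

definition is_limit :: "'i::wellorder \<Rightarrow> bool" where
  "is_limit \<alpha> \<longleftrightarrow> (\<exists>\<beta>. \<beta> < \<alpha>) \<and> (\<forall>\<beta><\<alpha>. \<exists>\<gamma>. \<beta> < \<gamma> \<and> \<gamma> < \<alpha>)"

definition series_factor :: "'a monoid \<Rightarrow> ('i::wellorder \<Rightarrow> 'a set) \<Rightarrow> 'i \<Rightarrow> 'a set monoid" where
  "series_factor G Gs \<alpha> = (G\<lparr>carrier := Gs \<alpha>\<rparr>) Mod (Gs (osucc \<alpha>))"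

definition accessible_series ::
  "'a monoid \<Rightarrow> 'a topology \<Rightarrow> ('i::wellorder \<Rightarrow> 'a set) \<Rightarrow> 'i \<Rightarrow> bool" where
  "accessible_series G T Gs \<mu> \<longleftrightarrow>
     (\<forall>\<alpha>\<le>\<mu>. (\<forall>\<beta>. \<not> \<beta> < \<alpha>) \<longrightarrow> Gs \<alpha> = carrier G) \<and>
     Gs \<mu> = {\<one>\<^bsub>G\<^esub>} \<and>
     (\<forall>\<alpha>\<le>\<mu>. subgroup (Gs \<alpha>) G \<and> closedin T (Gs \<alpha>)) \<and>
     (\<forall>\<alpha> \<beta>. \<alpha> \<le> \<beta> \<and> \<beta> \<le> \<mu> \<longrightarrow> Gs \<beta> \<subseteq> Gs \<alpha>) \<and>
     (\<forall>\<alpha><\<mu>. Gs (osucc \<alpha>) \<lhd> (G\<lparr>carrier := Gs \<alpha>\<rparr>)) \<and>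
     (\<forall>\<alpha>\<le>\<mu>. is_limit \<alpha> \<longrightarrow> Gs \<alpha> = (\<Inter>\<beta>\<in>{..<\<alpha>}. Gs \<beta>))"

definition composition_series ::
  "'a monoid \<Rightarrow> 'a topology \<Rightarrow> ('i::wellorder \<Rightarrow> 'a set) \<Rightarrow> 'i \<Rightarrow> bool" where
  "composition_series G T Gs \<mu> \<longleftrightarrow> accessible_series G T Gs \<mu> \<and>
     (\<forall>\<alpha><\<mu>. finite (carrier (series_factor G Gs \<alpha>)) \<and> simple_group (series_factor G Gs \<alpha>))"

definition finite_composition_series :: "'x monoid \<Rightarrow> (nat \<Rightarrow> 'x set) \<Rightarrow> nat \<Rightarrow> bool" where
  "finite_composition_series A cs m \<longleftrightarrow>
     cs 0 = carrier A \<and> cs m = {\<one>\<^bsub>A\<^esub>} \<and>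
     (\<forall>i\<le>m. subgroup (cs i) A) \<and>
     (\<forall>i<m. cs (Suc i) \<lhd> (A\<lparr>carrier := cs i\<rparr>) \<and>
            simple_group ((A\<lparr>carrier := cs i\<rparr>) Mod (cs (Suc i))))"

(* k is the number of composition factors isomorphic to S in (some) composition series of A;
   by Jordan-Hoelder this does not depend on the series. *)
definition comp_factor_count :: "'x monoid \<Rightarrow> 's monoid \<Rightarrow> nat \<Rightarrow> bool" where
  "comp_factor_count A S k \<longleftrightarrow> (\<exists>cs m. finite_composition_series A cs m \<and>
     k = card {i. i < m \<and> ((A\<lparr>carrier := cs i\<rparr>) Mod (cs (Suc i))) \<cong> S})"

definition finite_quotient_counts :: "'a monoid \<Rightarrow> 'a topology \<Rightarrow> 's monoid \<Rightarrow> nat set" where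
  "finite_quotient_counts G T S = {k. \<exists>N. closedin T N \<and> N \<lhd> G \<and>
      finite (carrier (G Mod N)) \<and> comp_factor_count (G Mod N) S k}"

end

theory Submission
  imports Defs "HOL-Algebra.SndIsomorphismGrp"
begin

(* For a closed normal subgroup N of finite index, the images (G_\<alpha> N)/N form a descending chain
   in the finite group G/N. By compactness this chain is continuous at limit ordinals, so it drops
   only at finitely many successor steps, and dropping the repetitions leaves a composition series
   of G/N whose factors are, up to isomorphism, the G_\<alpha>/G_(\<alpha>+1) at these steps. Hence n_(S,G/N)
   counts a finite subset of S_1. Conversely, a profinite group has enough open normal subgroups
   to see finitely many indices at once: for x_\<alpha> in G_\<alpha> - G_(\<alpha>+1) choose N with N x_\<alpha>
   disjoint from G_(\<alpha>+1). So the counts are bounded iff S_1 is finite, with maximum |S_1|. *)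

section \<open>Compact spaces\<close>

lemma separated_between_point_closedin:
  assumes "compact_space X" "Hausdorff_space X" "totally_disconnected_space X"
    and x: "x \<in> topspace X" and C: "closedin X C" "x \<notin> C"
  shows "separated_between X {x} C"
proof -
  have "\<not> quasi_component_of X x y" if "y \<in> C" for y
  proof
    assume "quasi_component_of X x y"
    then have "connected_component_of X x y"
      using assms(1,2) quasi_eq_connected_component_of by metis
    moreover obtain a where "connected_component_of_set X x \<subseteq> {a}"
      using assms(3) connectedin_connected_component_of connected_component_of_subset_topspace
      unfolding totally_disconnected_space_def by metis
    ultimately show False
      using x that C by (metis connected_component_of_refl insertE mem_Collect_eq singletonD subsetD)
  qed
  moreover have "compactin X C"
    using assms(1) C(1) by (rule closedin_compact_space)
  ultimately show ?thesis
    using x C closedin_subset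
    by (auto simp: separated_between_pointwise_right separated_between_singletons)
qed

lemma compact_space_Inter_chain_nonempty:
  fixes U :: "'i::linorder \<Rightarrow> 'a set"
  assumes "compact_space X" and closed: "\<And>\<delta>. \<delta> \<in> I \<Longrightarrow> closedin X (U \<delta>)"
    and nonempty: "\<And>\<delta>. \<delta> \<in> I \<Longrightarrow> U \<delta> \<noteq> {}"
    and chain: "\<And>\<delta> \<delta>'. \<delta> \<in> I \<Longrightarrow> \<delta>' \<in> I \<Longrightarrow> \<delta> \<le> \<delta>' \<Longrightarrow> U \<delta>' \<subseteq> U \<delta>"
  shows "(\<Inter>\<delta>\<in>I. U \<delta>) \<noteq> {}"
proof -
  have "\<Inter>(U ` D) \<noteq> {}" if D: "D \<subseteq> I" "finite D" for D
  proof (cases "D = {}")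
    case False
    then have "U (Max D) \<subseteq> U \<delta>" if "\<delta> \<in> D" for \<delta>
      using chain D that Max_ge Max_in False by (metis subsetD)
    then have "U (Max D) \<subseteq> \<Inter>(U ` D)"
      by blast
    moreover have "Max D \<in> I"
      using D False Max_in by blast
    ultimately show ?thesis
      using nonempty by blast
  qed simp
  then have "\<forall>\<F>. finite \<F> \<and> \<F> \<subseteq> U ` I \<longrightarrow> \<Inter>\<F> \<noteq> {}"
    by (metis finite_subset_image)
  moreover have "\<forall>C\<in>U ` I. closedin X C"
    using closed by blast
  ultimately show ?thesis
    using assms(1)[unfolded compact_space_fip, rule_format, of "U ` I"] by blast
qed

section \<open>Profinite groups\<close>

definition normal_core :: "('a, 'b) monoid_scheme \<Rightarrow> 'a set \<Rightarrow> 'a set" where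
  "normal_core G H = {x \<in> carrier G. \<forall>g\<in>carrier G. g \<otimes>\<^bsub>G\<^esub> x \<otimes>\<^bsub>G\<^esub> inv\<^bsub>G\<^esub> g \<in> H}"

context group
begin

lemma inv_m_cancel [simp]: "g \<in> carrier G \<Longrightarrow> y \<in> carrier G \<Longrightarrow> inv g \<otimes> (g \<otimes> y) = y"
  by (simp add: m_assoc[symmetric])

lemma m_inv_cancel [simp]: "g \<in> carrier G \<Longrightarrow> y \<in> carrier G \<Longrightarrow> g \<otimes> (inv g \<otimes> y) = y"
  by (simp add: m_assoc[symmetric])

lemma normal_core_subset: "normal_core G H \<subseteq> H"
proof
  fix x assume "x \<in> normal_core G H"
  then have "x \<in> carrier G" "\<one> \<otimes> x \<otimes> inv \<one> \<in> H"
    unfolding normal_core_def using one_closed by blast+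
  then show "x \<in> H" by simp
qed

lemma normal_core_normal:
  assumes H: "subgroup H G"
  shows "normal_core G H \<lhd> G"
proof -
  have conj_mult: "g \<otimes> (a \<otimes> b) \<otimes> inv g = (g \<otimes> a \<otimes> inv g) \<otimes> (g \<otimes> b \<otimes> inv g)"
    and conj_inv: "g \<otimes> inv a \<otimes> inv g = inv (g \<otimes> a \<otimes> inv g)"
    and conj_conj: "g \<otimes> (x \<otimes> a \<otimes> inv x) \<otimes> inv g = (g \<otimes> x) \<otimes> a \<otimes> inv (g \<otimes> x)"
    if "g \<in> carrier G" "x \<in> carrier G" "a \<in> carrier G" "b \<in> carrier G" for g x a b
    using that by (simp_all add: m_assoc inv_mult_group)
  have "subgroup (normal_core G H) G"
  proof (rule subgroupI)
    show "normal_core G H \<noteq> {}"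
      using H by (auto simp: normal_core_def subgroup.one_closed intro!: exI[of _ \<one>])
  qed (use H in \<open>auto simp: normal_core_def conj_mult conj_inv subgroup.m_closed subgroup.m_inv_closed\<close>)
  then show ?thesis
    unfolding normal_inv_iff by (auto simp: normal_core_def conj_conj)
qed

lemma r_coset_eq_preimage:
  assumes "C \<subseteq> carrier G" "g \<in> carrier G"
  shows "C #> g = {x \<in> carrier G. x \<otimes> inv g \<in> C}"
proof
  show "C #> g \<subseteq> {x \<in> carrier G. x \<otimes> inv g \<in> C}"
    using assms by (auto simp: r_coset_def m_assoc subsetD)
  show "{x \<in> carrier G. x \<otimes> inv g \<in> C} \<subseteq> C #> g"
  proof clarify
    fix x assume x: "x \<in> carrier G" "x \<otimes> inv g \<in> C"
    then have "x = (x \<otimes> inv g) \<otimes> g" using assms by (simp add: m_assoc)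
    with x show "x \<in> C #> g" unfolding r_coset_def by blast
  qed
qed

lemma l_coset_eq_preimage:
  assumes "C \<subseteq> carrier G" "g \<in> carrier G"
  shows "g <# C = {x \<in> carrier G. inv g \<otimes> x \<in> C}"
proof
  show "g <# C \<subseteq> {x \<in> carrier G. inv g \<otimes> x \<in> C}"
    using assms by (auto simp: l_coset_def m_assoc[symmetric] subsetD)
  show "{x \<in> carrier G. inv g \<otimes> x \<in> C} \<subseteq> g <# C"
  proof clarify
    fix x assume x: "x \<in> carrier G" "inv g \<otimes> x \<in> C"
    then have "x = g \<otimes> (inv g \<otimes> x)" using assms by (simp add: m_assoc[symmetric])
    with x show "x \<in> g <# C" unfolding l_coset_def by blast
  qed
qed

lemma r_coset_stabilizer_subgroup:
  assumes U: "U \<subseteq> carrier G"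
  shows "subgroup {g \<in> carrier G. U #> g = U} G"
proof (rule subgroupI)
  show "{g \<in> carrier G. U #> g = U} \<noteq> {}"
    using U by (auto intro!: exI[of _ \<one>])
  show "inv a \<in> {g \<in> carrier G. U #> g = U}" if "a \<in> {g \<in> carrier G. U #> g = U}" for a
    using that U coset_mult_assoc[of U a "inv a"] by simp
  show "a \<otimes> b \<in> {g \<in> carrier G. U #> g = U}"
    if "a \<in> {g \<in> carrier G. U #> g = U}" "b \<in> {g \<in> carrier G. U #> g = U}" for a b
    using that U coset_mult_assoc[of U a b] by simp
qed auto

lemma conjugate_mem_iff_r_coset:
  assumes H: "subgroup H G" and x: "x \<in> carrier G" and g: "g \<in> carrier G" and g': "g' \<in> H #> g"
  shows "g' \<otimes> x \<otimes> inv g' \<in> H \<longleftrightarrow> g \<otimes> x \<otimes> inv g \<in> H"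
proof -
  obtain h where h: "h \<in> H" "g' = h \<otimes> g"
    using g' unfolding r_coset_def by blast
  have hc: "h \<in> carrier G"
    using subgroup.mem_carrier[OF H h(1)] .
  have c: "g \<otimes> x \<otimes> inv g \<in> carrier G"
    using g x by simp
  have conj: "g' \<otimes> x \<otimes> inv g' = h \<otimes> (g \<otimes> x \<otimes> inv g) \<otimes> inv h"
    using h(2) hc g x by (simp add: m_assoc inv_mult_group)
  have unconj: "inv h \<otimes> (h \<otimes> (g \<otimes> x \<otimes> inv g) \<otimes> inv h) \<otimes> h = g \<otimes> x \<otimes> inv g"
    using hc c by (simp add: m_assoc)
  have "inv h \<in> H"
    using subgroup.m_inv_closed[OF H h(1)] by simp
  then show ?thesis
    unfolding conj using H h(1) unconj by (metis subgroup.m_closed)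
qed

end

locale topgroup =
  fixes G :: "'a monoid" (structure) and T :: "'a topology"
  assumes topological_group: "topological_group G T"
begin

sublocale group G
  using topological_group by (simp add: topological_group_def)

lemma topspace_eq [simp]: "topspace T = carrier G"
  using topological_group by (simp add: topological_group_def)

lemma continuous_map_mult: "continuous_map (prod_topology T T) T (\<lambda>(x, y). x \<otimes> y)"
  using topological_group by (simp add: topological_group_def)

lemma continuous_map_mult_left:
  assumes "a \<in> carrier G" shows "continuous_map T T (\<lambda>x. a \<otimes> x)"
proof -
  have "continuous_map T (prod_topology T T) (\<lambda>x. (a, x))"
    using assms by (intro continuous_map_pairedI) auto
  from continuous_map_compose[OF this continuous_map_mult] show ?thesis
    by (simp add: o_def)
qed

lemma continuous_map_mult_right:
  assumes "a \<in> carrier G" shows "continuous_map T T (\<lambda>x. x \<otimes> a)"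
proof -
  have "continuous_map T (prod_topology T T) (\<lambda>x. (x, a))"
    using assms by (intro continuous_map_pairedI) auto
  from continuous_map_compose[OF this continuous_map_mult] show ?thesis
    by (simp add: o_def)
qed

lemma continuous_map_inv: "continuous_map T T (\<lambda>x. inv x)"
  using topological_group by (simp add: topological_group_def)

lemma closedin_r_coset:
  assumes "closedin T C" "g \<in> carrier G"
  shows "closedin T (C #> g)"
  using closedin_continuous_map_preimage[OF continuous_map_mult_right assms(1), of "inv g"]
    closedin_subset[OF assms(1)] assms(2)
  by (simp add: r_coset_eq_preimage)

lemma openin_r_coset:
  assumes "openin T C" "g \<in> carrier G"
  shows "openin T (C #> g)"
  using openin_continuous_map_preimage[OF continuous_map_mult_right assms(1), of "inv g"]
    openin_subset[OF assms(1)] assms(2)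
  by (simp add: r_coset_eq_preimage)

lemma openin_l_coset:
  assumes "openin T C" "g \<in> carrier G"
  shows "openin T (g <# C)"
  using openin_continuous_map_preimage[OF continuous_map_mult_left assms(1), of "inv g"]
    openin_subset[OF assms(1)] assms(2)
  by (simp add: l_coset_eq_preimage)

lemma openin_subgroup_if_nhds_one:
  assumes H: "subgroup H G" and V: "openin T V" "\<one> \<in> V" "V \<subseteq> H"
  shows "openin T H"
  unfolding openin_subopen[of T H]
proof
  fix h assume h: "h \<in> H"
  then have hc: "h \<in> carrier G"
    by (rule subgroup.mem_carrier[OF H])
  have "h <# V \<subseteq> H"
    using subgroup.m_closed[OF H h] V(3) unfolding l_coset_def by blast
  moreover have "h \<otimes> \<one> \<in> h <# V"
    using V(2) unfolding l_coset_def by blast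
  then have "h \<in> h <# V"
    by (simp only: r_one[OF hc])
  ultimately show "\<exists>W. openin T W \<and> h \<in> W \<and> W \<subseteq> H"
    using openin_l_coset[OF V(1) hc] by blast
qed

lemma closedin_open_subgroup:
  assumes H: "subgroup H G" and "openin T H"
  shows "closedin T H"
proof -
  have "H #> x \<subseteq> carrier G - H" if x: "x \<in> carrier G - H" for x
  proof
    fix y assume "y \<in> H #> x"
    then obtain h where h: "h \<in> H" "y = h \<otimes> x"
      unfolding r_coset_def by blast
    have hc: "h \<in> carrier G"
      by (rule subgroup.mem_carrier[OF H h(1)])
    have "y \<notin> H"
    proof
      assume "y \<in> H"
      then have "inv h \<otimes> y \<in> H"
        by (rule subgroup.m_closed[OF H subgroup.m_inv_closed[OF H h(1)]])
      moreover have "inv h \<otimes> y = x"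
        using h(2) hc x by simp
      ultimately show False
        using x by simp
    qed
    then show "y \<in> carrier G - H"
      using h(2) hc x by simp
  qed
  moreover have "x \<in> H #> x" if "x \<in> carrier G" for x
    using that H by (rule rcos_self)
  ultimately have "topspace T - H = (\<Union>x\<in>carrier G - H. H #> x)"
    by auto
  moreover have "openin T (\<Union>x\<in>carrier G - H. H #> x)"
    using assms(2) openin_r_coset by blast
  ultimately show ?thesis
    using subgroup.subset[OF H] unfolding closedin_def by simp
qed

lemma compact_absorbing_nhds_one:
  assumes U: "compactin T U" "openin T U"
  obtains V where "openin T V" "\<one> \<in> V"
    "\<And>u v. u \<in> U \<Longrightarrow> v \<in> V \<Longrightarrow> u \<otimes> v \<in> U \<and> u \<otimes> inv v \<in> U"
proof -
  have Usub: "U \<subseteq> carrier G"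
    using openin_subset[OF U(2)] by simp
  define W where "W = {p \<in> topspace (prod_topology T T). (\<lambda>(x, y). x \<otimes> y) p \<in> U}"
  have "openin (prod_topology T T) W"
    unfolding W_def by (rule openin_continuous_map_preimage[OF continuous_map_mult U(2)])
  moreover have "U \<times> {\<one>} \<subseteq> W"
    using Usub by (auto simp: W_def)
  ultimately obtain U' V1 where V1: "openin T V1" "U \<subseteq> U'" "\<one> \<in> V1" "U' \<times> V1 \<subseteq> W"
    using tube_lemma_left[OF _ U(1), of T W \<one>] by auto
  have mult: "u \<otimes> v \<in> U" if "u \<in> U" "v \<in> V1" for u v
  proof -
    have "(u, v) \<in> W"
      using V1(2,4) that by blast
    then show ?thesis
      by (simp add: W_def)
  qed
  define V where "V = V1 \<inter> {v \<in> topspace T. inv v \<in> V1}"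
  have "openin T V"
    unfolding V_def using V1(1) openin_continuous_map_preimage[OF continuous_map_inv V1(1)] by blast
  moreover have "\<one> \<in> V"
    using V1(3) by (simp add: V_def)
  ultimately show ?thesis
    using that mult unfolding V_def by blast
qed

lemma open_subgroup_in_compact_open:
  assumes U: "compactin T U" "openin T U" "\<one> \<in> U"
  obtains H where "subgroup H G" "openin T H" "H \<subseteq> U"
proof -
  obtain V where V: "openin T V" "\<one> \<in> V"
    and absorb: "\<And>u v. u \<in> U \<Longrightarrow> v \<in> V \<Longrightarrow> u \<otimes> v \<in> U \<and> u \<otimes> inv v \<in> U"
    using compact_absorbing_nhds_one U(1,2) by blast
  have Usub: "U \<subseteq> carrier G"
    using openin_subset[OF U(2)] by simp
  define H where "H = {g \<in> carrier G. U #> g = U}"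
  have "subgroup H G"
    unfolding H_def using r_coset_stabilizer_subgroup[OF Usub] .
  moreover have "H \<subseteq> U"
  proof
    fix g assume g: "g \<in> H"
    then have "\<one> \<otimes> g \<in> U #> g"
      using U(3) Usub by (intro rcosI) (auto simp: H_def)
    then show "g \<in> U"
      using g by (simp add: H_def)
  qed
  moreover have "V \<subseteq> H"
  proof
    fix v assume v: "v \<in> V"
    have vc: "v \<in> carrier G"
      using openin_subset[OF V(1)] v by auto
    have "U #> v \<subseteq> U"
      using absorb v unfolding r_coset_def by blast
    moreover have "u \<in> U #> v" if "u \<in> U" for u
    proof -
      have uc: "u \<in> carrier G"
        using that Usub by blast
      have "(u \<otimes> inv v) \<otimes> v \<in> U #> v"
        using absorb[OF that v] Usub vc by (intro rcosI) auto
      then show ?thesis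
        using uc vc by (simp add: m_assoc)
    qed
    ultimately show "v \<in> H"
      using vc by (auto simp: H_def)
  qed
  ultimately show ?thesis
    using that openin_subgroup_if_nhds_one V by blast
qed

end

locale compact_topgroup = topgroup +
  assumes compact: "compact_space T"
begin

lemma finite_rcosets_open_subgroup:
  assumes H: "subgroup H G" and "openin T H"
  shows "finite (rcosets H)"
proof -
  have "\<forall>C\<in>rcosets H. openin T C"
    using assms(2) openin_r_coset unfolding RCOSETS_def by blast
  moreover have "topspace T \<subseteq> \<Union>(rcosets H)"
    using H rcos_self unfolding RCOSETS_def by fastforce
  ultimately obtain F where F: "finite F" "F \<subseteq> rcosets H" "topspace T \<subseteq> \<Union>F"
    using compact unfolding compact_space_alt by metis
  have "rcosets H \<subseteq> F"
  proof
    fix C assume "C \<in> rcosets H"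
    then obtain g where g: "g \<in> carrier G" "C = H #> g"
      unfolding RCOSETS_def by blast
    then obtain C' where C': "C' \<in> F" "g \<in> C'"
      using F(3) by auto
    then obtain g' where g': "g' \<in> carrier G" "C' = H #> g'"
      using F(2) unfolding RCOSETS_def by blast
    have "H #> g' = H #> g"
      using repr_independence[OF _ g'(1) H] C' g' by simp
    then show "C \<in> F"
      using C' g' g by simp
  qed
  then show ?thesis
    using F(1) finite_subset by blast
qed

lemma closedin_finite_quotient_open_normal:
  assumes N: "N \<lhd> G" and "openin T N"
  shows "closedin T N" "finite (carrier (G Mod N))"
  using closedin_open_subgroup finite_rcosets_open_subgroup normal_imp_subgroup[OF N] assms(2)
  by (simp_all add: FactGroup_def)

lemma openin_normal_core:
  assumes H: "subgroup H G" and "openin T H"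
  shows "openin T (normal_core G H)"
proof -
  define P where "P g = {x \<in> carrier G. g \<otimes> x \<otimes> inv g \<in> H}" for g
  define Q where "Q C = {x \<in> carrier G. \<forall>g\<in>C. g \<otimes> x \<otimes> inv g \<in> H}" for C
  have "P g = Q (H #> g)" if g: "g \<in> carrier G" for g
    using conjugate_mem_iff_r_coset[OF H _ g] rcos_self[OF g H] unfolding P_def Q_def by blast
  then have "P ` carrier G \<subseteq> Q ` (rcosets H)"
    unfolding RCOSETS_def by blast
  then have "finite (P ` carrier G)"
    using finite_rcosets_open_subgroup[OF assms] finite_surj by blast
  moreover have "openin T (P g)" if "g \<in> carrier G" for g
  proof -
    have "continuous_map T T (\<lambda>x. g \<otimes> x \<otimes> inv g)"
      using continuous_map_compose[OF continuous_map_mult_left continuous_map_mult_right] that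
      by (simp add: o_def)
    from openin_continuous_map_preimage[OF this assms(2)] show ?thesis
      unfolding P_def by simp
  qed
  moreover have "normal_core G H = \<Inter>(insert (carrier G) (P ` carrier G))"
    unfolding normal_core_def P_def by auto
  moreover have "openin T (carrier G)"
    using openin_topspace[of T] by simp
  ultimately show ?thesis
    by (auto intro: openin_Inter)
qed

end

locale profinite = compact_topgroup +
  assumes Hausdorff: "Hausdorff_space T"
    and totally_disconnected: "totally_disconnected_space T"
begin

lemma open_normal_subgroup_disjoint_closedin:
  assumes C: "closedin T C" "\<one> \<notin> C"
  obtains N where "N \<lhd> G" "openin T N" "N \<inter> C = {}"
proof -
  have "separated_between T {\<one>} C"
    using separated_between_point_closedin[OF compact Hausdorff totally_disconnected _ C] by simp
  then obtain U where U: "closedin T U" "openin T U" "\<one> \<in> U" "U \<inter> C = {}"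
    unfolding separated_between by blast
  obtain H where H: "subgroup H G" "openin T H" "H \<subseteq> U"
    using open_subgroup_in_compact_open closedin_compact_space[OF compact U(1)] U(2,3) by blast
  show ?thesis
    using that[OF normal_core_normal[OF H(1)] openin_normal_core[OF H(1,2)]]
      normal_core_subset[of H] H(3) U(4) by blast
qed

end

lemma profinite_group_imp_profinite: "profinite_group G T \<Longrightarrow> profinite G T"
  unfolding profinite_group_def profinite_def profinite_axioms_def compact_topgroup_def
    compact_topgroup_axioms_def topgroup_def
  by blast

section \<open>Composition series of finite groups\<close>

definition iso_factor_count :: "'x monoid \<Rightarrow> (nat \<Rightarrow> 'x set) \<Rightarrow> nat \<Rightarrow> 's monoid \<Rightarrow> nat" where
  "iso_factor_count A cs m S = card {i. i < m \<and> ((A\<lparr>carrier := cs i\<rparr>) Mod (cs (Suc i))) \<cong> S}"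

lemma comp_factor_count_iff:
  "comp_factor_count A S k \<longleftrightarrow> (\<exists>cs m. finite_composition_series A cs m \<and> k = iso_factor_count A cs m S)"
  unfolding comp_factor_count_def iso_factor_count_def ..

lemma card_less_Suc_split:
  "card {i. i < Suc k \<and> P i} = (if P 0 then 1 else 0) + card {i. i < k \<and> P (Suc i)}"
proof -
  have "{i. i < Suc k \<and> P i} = (if P 0 then {0} else {}) \<union> Suc ` {i. i < k \<and> P (Suc i)}"
    by (auto simp: less_Suc_eq_0_disj)
  moreover have "card ((if P 0 then {0} else {}) \<union> Suc ` {i. i < k \<and> P (Suc i)}) =
      card (if P 0 then {0::nat} else {}) + card (Suc ` {i. i < k \<and> P (Suc i)})"
    by (rule card_Un_disjoint) auto
  moreover have "card (Suc ` {i. i < k \<and> P (Suc i)}) = card {i. i < k \<and> P (Suc i)}"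
    by (rule card_image) simp
  ultimately show ?thesis
    by simp
qed

lemma iso_trans_iff:
  assumes "group X" "group Y" "X \<cong> Y"
  shows "X \<cong> S \<longleftrightarrow> Y \<cong> S"
  using assms iso_trans group.iso_sym by metis

lemma simple_group_iso:
  assumes "simple_group X" "group Y" "X \<cong> Y"
  shows "simple_group Y"
  using assms simple_group.iso_simple unfolding is_iso_def by blast

lemma (in group) simple_quotient_proper:
  assumes "simple_group (G Mod H)"
  shows "H \<noteq> carrier G"
  using assms self_factor_not_simple by blast

lemma (in group) simple_quotient_maximal:
  assumes H: "H \<lhd> G" and M: "M \<lhd> G" and HM: "H \<subseteq> M" and simple: "simple_group (G Mod H)"
  shows "M = H \<or> M = carrier G"
proof -
  have Hs: "subgroup H G" and Ms: "subgroup M G"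
    using H M normal_imp_subgroup by auto
  have "rcosets\<^bsub>G\<lparr>carrier := M\<rparr>\<^esub> H \<lhd> G Mod H"
    by (rule normality_factorization[OF H HM M])
  then consider "rcosets\<^bsub>G\<lparr>carrier := M\<rparr>\<^esub> H = carrier (G Mod H)"
    | "rcosets\<^bsub>G\<lparr>carrier := M\<rparr>\<^esub> H = {\<one>\<^bsub>G Mod H\<^esub>}"
    using simple_group.no_real_normal_subgroup[OF simple] by blast
  then show ?thesis
  proof cases
    case 1
    have "carrier G \<subseteq> M"
    proof
      fix g assume g: "g \<in> carrier G"
      then have "H #> g \<in> carrier (G Mod H)"
        unfolding FactGroup_def RCOSETS_def by auto
      then obtain m where m: "m \<in> M" "H #> g = H #> m"
        using 1 unfolding RCOSETS_def by auto
      have "g \<in> H #> m"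
        using rcos_self[OF g Hs] m(2) by simp
      then obtain h where h: "h \<in> H" "g = h \<otimes> m"
        unfolding r_coset_def by auto
      then show "g \<in> M"
        using subgroup.m_closed[OF Ms _ m(1)] HM by blast
    qed
    then show ?thesis
      using subgroup.subset[OF Ms] by blast
  next
    case 2
    have "M \<subseteq> H"
    proof
      fix m assume m: "m \<in> M"
      then have "H #> m = H"
        using 2 unfolding RCOSETS_def by auto
      then show "m \<in> H"
        using rcos_self[OF _ Hs] subgroup.mem_carrier[OF Ms m] by metis
    qed
    then show ?thesis
      using HM by blast
  qed
qed

lemma finite_composition_series_decreasing:
  assumes cs: "finite_composition_series A cs m" and "i \<le> j" "j \<le> m"
  shows "cs j \<subseteq> cs i"
  using assms(2,3)
proof (induction j)
  case (Suc j)
  show ?case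
  proof (cases "i = Suc j")
    case False
    have "cs (Suc j) \<lhd> A\<lparr>carrier := cs j\<rparr>"
      using cs Suc.prems unfolding finite_composition_series_def by simp
    then have "cs (Suc j) \<subseteq> cs j"
      using normal_imp_subgroup subgroup.subset by fastforce
    then show ?thesis
      using Suc False by simp
  qed simp
qed simp

lemma finite_composition_series_tail:
  assumes A: "group A" and cs: "finite_composition_series A cs (Suc k)"
  shows "finite_composition_series (A\<lparr>carrier := cs 1\<rparr>) (\<lambda>i. cs (Suc i)) k"
    and "iso_factor_count A cs (Suc k) S =
      (if A Mod cs 1 \<cong> S then 1 else 0) + iso_factor_count (A\<lparr>carrier := cs 1\<rparr>) (\<lambda>i. cs (Suc i)) k S"
proof -
  have sub: "subgroup (cs i) A" if "i \<le> Suc k" for i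
    using cs that unfolding finite_composition_series_def by blast
  show "finite_composition_series (A\<lparr>carrier := cs 1\<rparr>) (\<lambda>i. cs (Suc i)) k"
    unfolding finite_composition_series_def
  proof (intro conjI allI impI)
    show "subgroup (cs (Suc i)) (A\<lparr>carrier := cs 1\<rparr>)" if "i \<le> k" for i
      using group.subgroup_incl[OF A sub[of "Suc i"] sub[of 1]]
        finite_composition_series_decreasing[OF cs, of 1 "Suc i"] that by simp
  qed (use cs in \<open>simp_all add: finite_composition_series_def\<close>)
  have "cs 0 = carrier A"
    using cs unfolding finite_composition_series_def by simp
  then show "iso_factor_count A cs (Suc k) S =
      (if A Mod cs 1 \<cong> S then 1 else 0) + iso_factor_count (A\<lparr>carrier := cs 1\<rparr>) (\<lambda>i. cs (Suc i)) k S"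
    unfolding iso_factor_count_def card_less_Suc_split by simp
qed

lemma finite_composition_series_cons:
  assumes A: "group A" and H: "H \<lhd> A" and simple: "simple_group (A Mod H)"
    and cs: "finite_composition_series (A\<lparr>carrier := H\<rparr>) cs k"
  defines "cs' \<equiv> \<lambda>i. if i = 0 then carrier A else cs (i - 1)"
  shows "finite_composition_series A cs' (Suc k)"
    and "iso_factor_count A cs' (Suc k) S =
      (if A Mod H \<cong> S then 1 else 0) + iso_factor_count (A\<lparr>carrier := H\<rparr>) cs k S"
proof -
  have Hs: "subgroup H A"
    using H normal_imp_subgroup by blast
  have cs0: "cs 0 = H"
    using cs unfolding finite_composition_series_def by simp
  show "finite_composition_series A cs' (Suc k)"
    unfolding finite_composition_series_def
  proof (intro conjI allI impI)
    show "subgroup (cs' i) A" if "i \<le> Suc k" for i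
      using cs that group.incl_subgroup[OF A Hs] group.subgroup_self[OF A]
      unfolding cs'_def finite_composition_series_def by (cases i) auto
    show "cs' (Suc i) \<lhd> A\<lparr>carrier := cs' i\<rparr>"
      and "simple_group (A\<lparr>carrier := cs' i\<rparr> Mod cs' (Suc i))" if "i < Suc k" for i
      using cs that H simple cs0 unfolding cs'_def finite_composition_series_def
      by (cases i; simp)+
  qed (use cs in \<open>simp_all add: cs'_def finite_composition_series_def\<close>)
  show "iso_factor_count A cs' (Suc k) S =
      (if A Mod H \<cong> S then 1 else 0) + iso_factor_count (A\<lparr>carrier := H\<rparr>) cs k S"
    unfolding iso_factor_count_def card_less_Suc_split using cs0 by (simp add: cs'_def)
qed

lemma finite_composition_series_head:
  assumes cs: "finite_composition_series A cs (Suc k)"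
  shows "cs 1 \<lhd> A" "simple_group (A Mod cs 1)"
proof -
  have "cs 0 = carrier A" "cs (Suc 0) \<lhd> A\<lparr>carrier := cs 0\<rparr>"
    "simple_group (A\<lparr>carrier := cs 0\<rparr> Mod cs (Suc 0))"
    using cs unfolding finite_composition_series_def by auto
  then show "cs 1 \<lhd> A" "simple_group (A Mod cs 1)"
    by simp_all
qed

lemma finite_composition_series_length_zero_iff:
  assumes A: "group A" and cs: "finite_composition_series A cs m"
  shows "m = 0 \<longleftrightarrow> carrier A = {\<one>\<^bsub>A\<^esub>}"
proof
  assume "m = 0"
  then show "carrier A = {\<one>\<^bsub>A\<^esub>}"
    using cs unfolding finite_composition_series_def by auto
next
  assume trivial: "carrier A = {\<one>\<^bsub>A\<^esub>}"
  show "m = 0"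
  proof (rule ccontr)
    assume "m \<noteq> 0"
    then obtain k where "m = Suc k"
      using not0_implies_Suc by blast
    then have "cs 1 \<lhd> A" "simple_group (A Mod cs 1)"
      using finite_composition_series_head cs by blast+
    moreover have "cs 1 = carrier A"
      using trivial calculation(1) normal_imp_subgroup subgroup.one_closed subgroup.subset by fastforce
    ultimately show False
      using group.simple_quotient_proper[OF A] by blast
  qed
qed

lemma (in group) simple_quotient_if_maximal_normal:
  assumes fin: "finite (carrier G)" and H: "H \<lhd> G" "H \<noteq> carrier G"
    and max: "\<And>N. N \<lhd> G \<Longrightarrow> H \<subseteq> N \<Longrightarrow> N = H \<or> N = carrier G"
  shows "simple_group (G Mod H)"
proof -
  interpret normal H G
    by (rule H(1))
  have group: "group (G Mod H)"
    by (rule factorgroup_is_group)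
  show ?thesis
  proof (rule simple_group.intro[OF group], unfold_locales)
    have "finite (carrier (G Mod H))"
      using fin rcosets_subset_PowG[OF subgroup_axioms] finite_subset by (simp add: FactGroup_def) blast
    moreover have "carrier (G Mod H) \<noteq> {\<one>\<^bsub>G Mod H\<^esub>}"
      using fact_group_trivial_iff[OF fin] H(2) by simp
    moreover have "\<one>\<^bsub>G Mod H\<^esub> \<in> carrier (G Mod H)"
      using group.is_monoid[OF group] monoid.one_closed by blast
    ultimately have "card (carrier (G Mod H)) \<noteq> 1" "card (carrier (G Mod H)) \<noteq> 0"
      by (auto simp: card_1_singleton_iff)
    then show "1 < order (G Mod H)"
      unfolding order_def by linarith
  next
    fix M assume M: "M \<lhd> G Mod H"
    have Ms: "subgroup M (G Mod H)"
      using M normal_imp_subgroup by blast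
    have "H \<subseteq> \<Union>M"
      using subgroup.one_closed[OF Ms] by auto
    then consider "\<Union>M = H" | "\<Union>M = carrier G"
      using max factgroup_subgroup_union_normal[OF M] by blast
    moreover have "M = rcosets\<^bsub>G\<lparr>carrier := \<Union>M\<rparr>\<^esub> H"
      by (rule factgroup_subgroup_union_factor[OF Ms])
    moreover have "H \<noteq> {}"
      using subgroup.one_closed[OF subgroup_axioms] by blast
    then have "rcosets\<^bsub>G\<lparr>carrier := H\<rparr>\<^esub> H = {H}"
      using rcos_const[OF is_group] unfolding RCOSETS_def by auto
    ultimately show "M = carrier (G Mod H) \<or> M = {\<one>\<^bsub>G Mod H\<^esub>}"
      by (cases; simp add: FactGroup_def)
  qed
qed

lemma (in group) exists_simple_quotient:
  assumes fin: "finite (carrier G)" and nontrivial: "carrier G \<noteq> {\<one>}"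
  obtains H where "H \<lhd> G" "simple_group (G Mod H)"
proof -
  define \<N> where "\<N> = {N. N \<lhd> G \<and> N \<noteq> carrier G}"
  have "{\<one>} \<in> \<N>"
    unfolding \<N>_def using nontrivial one_is_normal by blast
  moreover have "finite \<N>"
    using fin finite_subset[of \<N> "Pow (carrier G)"] normal_imp_subgroup subgroup.subset
    unfolding \<N>_def by blast
  ultimately have "Max (card ` \<N>) \<in> card ` \<N>"
    by (intro Max_in) auto
  then obtain H where H: "H \<in> \<N>" "card H = Max (card ` \<N>)"
    by auto
  have H_max: "card N \<le> card H" if "N \<in> \<N>" for N
    using H(2) \<open>finite \<N>\<close> that by simp
  have "N = H \<or> N = carrier G" if N: "N \<lhd> G" "H \<subseteq> N" for N
  proof (cases "N = carrier G")
    case False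
    then have "card N \<le> card H"
      using H_max N(1) unfolding \<N>_def by blast
    moreover have "finite N"
      using fin N(1) normal_imp_subgroup subgroup.subset finite_subset by metis
    ultimately show ?thesis
      using N(2) card_seteq by blast
  qed simp
  then show ?thesis
    using that simple_quotient_if_maximal_normal[OF fin] H(1) unfolding \<N>_def by blast
qed

lemma simple_quotient_subgroup_smaller:
  assumes A: "group A" "finite (carrier A)" and H: "H \<lhd> A" "simple_group (A Mod H)"
  shows "group (A\<lparr>carrier := H\<rparr>)" "finite (carrier (A\<lparr>carrier := H\<rparr>))"
    "card (carrier (A\<lparr>carrier := H\<rparr>)) < card (carrier A)"
proof -
  have Hs: "subgroup H A"
    using H(1) normal_imp_subgroup by blast
  show "group (A\<lparr>carrier := H\<rparr>)"
    using Hs by (rule group.subgroup_imp_group[OF A(1)])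
  show "finite (carrier (A\<lparr>carrier := H\<rparr>))"
    using subgroup.subset[OF Hs] A(2) finite_subset by auto
  show "card (carrier (A\<lparr>carrier := H\<rparr>)) < card (carrier A)"
    using subgroup.subset[OF Hs] group.simple_quotient_proper[OF A(1) H(2)] A(2)
    by (simp add: psubsetI psubset_card_mono)
qed

lemma finite_composition_series_exists:
  assumes "group A" "finite (carrier A)"
  obtains cs m where "finite_composition_series A cs m"
  using assms
proof (induction "card (carrier A)" arbitrary: A thesis rule: less_induct)
  case less
  interpret group A
    by (rule less.prems(2))
  show ?case
  proof (cases "carrier A = {\<one>\<^bsub>A\<^esub>}")
    case True
    then have "finite_composition_series A (\<lambda>_. carrier A) 0"
      unfolding finite_composition_series_def using subgroup_self by simp
    then show ?thesis
      by (rule less.prems(1))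
  next
    case False
    then obtain H where H: "H \<lhd> A" "simple_group (A Mod H)"
      using exists_simple_quotient less.prems(3) by blast
    note smaller = simple_quotient_subgroup_smaller[OF less.prems(2,3) H]
    obtain cs m where "finite_composition_series (A\<lparr>carrier := H\<rparr>) cs m"
      using less.hyps[OF smaller(3) _ smaller(1,2)] by blast
    from finite_composition_series_cons(1)[OF less.prems(2) H this] show ?thesis
      by (rule less.prems(1))
  qed
qed

lemma (in group) simple_quotients_diamond:
  assumes H1: "H1 \<lhd> G" and H2: "H2 \<lhd> G" and "H1 \<noteq> H2"
    and simple1: "simple_group (G Mod H1)" and simple2: "simple_group (G Mod H2)"
  shows "H1 \<inter> H2 \<lhd> G\<lparr>carrier := H1\<rparr>" "(G\<lparr>carrier := H1\<rparr>) Mod (H1 \<inter> H2) \<cong> G Mod H2"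
proof -
  interpret second_isomorphism_grp H2 G H1
    using H1 H2 normal_imp_subgroup by (simp add: second_isomorphism_grp_def second_isomorphism_grp_axioms_def)
  have "H2 <#> H1 = H2 \<or> H2 <#> H1 = carrier G"
    using simple_quotient_maximal[OF H2 normal_subgroup_set_mult_closed[OF H2 H1] H_contained_in_set_mult simple2] .
  moreover have "H2 <#> H1 \<noteq> H2"
  proof
    assume "H2 <#> H1 = H2"
    then have "H2 = H1 \<or> H2 = carrier G"
      using simple_quotient_maximal[OF H1 H2 _ simple1] S_contained_in_set_mult by simp
    then show False
      using \<open>H1 \<noteq> H2\<close> simple_quotient_proper[OF simple2] by blast
  qed
  ultimately have "H2 <#> H1 = carrier G"
    by blast
  then show "(G\<lparr>carrier := H1\<rparr>) Mod (H1 \<inter> H2) \<cong> G Mod H2"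
    using normal_intersection_quotient_isom unfolding is_iso_def by (auto simp: Int_commute)
  show "H1 \<inter> H2 \<lhd> G\<lparr>carrier := H1\<rparr>"
    by (rule normal_subgrp_intersection_normal)
qed

lemma finite_composition_series_cons_iso:
  assumes B: "group B" and K: "K \<lhd> B" and iso: "B Mod K \<cong> Q" and Q: "simple_group Q"
    and csK: "finite_composition_series (B\<lparr>carrier := K\<rparr>) csK mK"
  obtains cs where "finite_composition_series B cs (Suc mK)"
    "iso_factor_count B cs (Suc mK) S =
      (if Q \<cong> S then 1 else 0) + iso_factor_count (B\<lparr>carrier := K\<rparr>) csK mK S"
proof -
  have groups: "group (B Mod K)" "group Q"
    using normal.factorgroup_is_group[OF K] Q simple_group_def by blast+
  have "simple_group (B Mod K)"
    using simple_group_iso[OF Q groups(1) group.iso_sym[OF groups(1) iso]] .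
  note cons = finite_composition_series_cons[OF B K this csK]
  show ?thesis
    by (rule that[OF cons(1)]) (simp add: cons(2) iso_trans_iff[OF groups iso])
qed

lemma simple_quotients_diamond_series:
  assumes A: "group A" "finite (carrier A)" and H1: "H1 \<lhd> A" "simple_group (A Mod H1)"
    and H2: "H2 \<lhd> A" "simple_group (A Mod H2)" and "H1 \<noteq> H2"
  obtains cs1 m1 cs2 m2 where "finite_composition_series (A\<lparr>carrier := H1\<rparr>) cs1 m1"
    "finite_composition_series (A\<lparr>carrier := H2\<rparr>) cs2 m2"
    "(if A Mod H1 \<cong> S then 1 else 0) + iso_factor_count (A\<lparr>carrier := H1\<rparr>) cs1 m1 S =
      (if A Mod H2 \<cong> S then 1 else 0) + iso_factor_count (A\<lparr>carrier := H2\<rparr>) cs2 m2 S"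
proof -
  define K where "K = H1 \<inter> H2"
  note diamond1 = group.simple_quotients_diamond[OF A(1) H1(1) H2(1) \<open>H1 \<noteq> H2\<close> H1(2) H2(2), folded K_def]
  have "H2 \<inter> H1 = K"
    by (simp add: K_def Int_commute)
  note diamond2 = group.simple_quotients_diamond[OF A(1) H2(1) H1(1) not_sym[OF \<open>H1 \<noteq> H2\<close>] H2(2) H1(2),
      unfolded this]
  have Ks: "subgroup K A"
    unfolding K_def using H1(1) H2(1) normal_imp_subgroup group.subgroups_Inter_pair[OF A(1)] by blast
  have "finite (carrier (A\<lparr>carrier := K\<rparr>))"
    using A(2) subgroup.subset[OF Ks] finite_subset by auto
  then obtain csK mK where csK: "finite_composition_series (A\<lparr>carrier := K\<rparr>) csK mK"
    using finite_composition_series_exists[OF group.subgroup_imp_group[OF A(1) Ks]] by blast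
  then have csK': "finite_composition_series (A\<lparr>carrier := H1, carrier := K\<rparr>) csK mK"
      "finite_composition_series (A\<lparr>carrier := H2, carrier := K\<rparr>) csK mK"
    by simp_all
  obtain cs1 where cs1: "finite_composition_series (A\<lparr>carrier := H1\<rparr>) cs1 (Suc mK)"
    "iso_factor_count (A\<lparr>carrier := H1\<rparr>) cs1 (Suc mK) S =
      (if A Mod H2 \<cong> S then 1 else 0) + iso_factor_count (A\<lparr>carrier := H1, carrier := K\<rparr>) csK mK S"
    by (rule finite_composition_series_cons_iso[OF simple_quotient_subgroup_smaller(1)[OF A H1]
          diamond1 H2(2) csK'(1)])
  obtain cs2 where cs2: "finite_composition_series (A\<lparr>carrier := H2\<rparr>) cs2 (Suc mK)"
    "iso_factor_count (A\<lparr>carrier := H2\<rparr>) cs2 (Suc mK) S =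
      (if A Mod H1 \<cong> S then 1 else 0) + iso_factor_count (A\<lparr>carrier := H2, carrier := K\<rparr>) csK mK S"
    by (rule finite_composition_series_cons_iso[OF simple_quotient_subgroup_smaller(1)[OF A H2]
          diamond2 H1(2) csK'(2)])
  show ?thesis
    by (rule that[OF cs1(1) cs2(1)]) (simp add: cs1(2) cs2(2))
qed

lemma iso_factor_count_unique:
  assumes "group A" "finite (carrier A)"
    and "finite_composition_series A cs m" "finite_composition_series A cs' m'"
  shows "iso_factor_count A cs m S = iso_factor_count A cs' m' S"
  using assms
proof (induction "card (carrier A)" arbitrary: A cs m cs' m' rule: less_induct)
  case less
  note A = less.prems(1,2) and cs = less.prems(3) and cs' = less.prems(4)
  show ?case
  proof (cases "carrier A = {\<one>\<^bsub>A\<^esub>}")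
    case True
    then have "m = 0" "m' = 0"
      using finite_composition_series_length_zero_iff[OF A(1) cs]
        finite_composition_series_length_zero_iff[OF A(1) cs'] by simp_all
    then show ?thesis
      by (simp add: iso_factor_count_def)
  next
    case False
    then obtain k k' where m: "m = Suc k" and m': "m' = Suc k'"
      using finite_composition_series_length_zero_iff[OF A(1)] cs cs' not0_implies_Suc by metis
    define H1 H2 where "H1 = cs 1" and "H2 = cs' 1"
    have heads: "H1 \<lhd> A" "simple_group (A Mod H1)" "H2 \<lhd> A" "simple_group (A Mod H2)"
      using finite_composition_series_head cs cs' unfolding m m' H1_def H2_def by blast+
    note tail1 = finite_composition_series_tail[OF A(1) cs[unfolded m], folded H1_def]
    note tail2 = finite_composition_series_tail[OF A(1) cs'[unfolded m'], folded H2_def]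
    note smaller1 = simple_quotient_subgroup_smaller[OF A heads(1,2)]
    note smaller2 = simple_quotient_subgroup_smaller[OF A heads(3,4)]
    note IH1 = less.hyps[OF smaller1(3,1,2) tail1(1)]
    note IH2 = less.hyps[OF smaller2(3,1,2) tail2(1)]
    show ?thesis
    proof (cases "H1 = H2")
      case True
      then show ?thesis
        unfolding m m' tail1(2)[of S] tail2(2)[of S] using IH1[OF tail2(1)[folded True]] by simp
    next
      case False
      obtain cs1 m1 cs2 m2 where "finite_composition_series (A\<lparr>carrier := H1\<rparr>) cs1 m1"
        "finite_composition_series (A\<lparr>carrier := H2\<rparr>) cs2 m2"
        "(if A Mod H1 \<cong> S then 1 else 0) + iso_factor_count (A\<lparr>carrier := H1\<rparr>) cs1 m1 S =
          (if A Mod H2 \<cong> S then 1 else 0) + iso_factor_count (A\<lparr>carrier := H2\<rparr>) cs2 m2 S"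
        by (rule simple_quotients_diamond_series[OF A heads False])
      then show ?thesis
        unfolding m m' tail1(2)[of S] tail2(2)[of S] using IH1 IH2 by simp
    qed
  qed
qed

lemma (in group_hom) kernel_comp_quotient_map:
  assumes "N \<lhd> H"
  shows "kernel G (H Mod N) ((\<lambda>a. N #>\<^bsub>H\<^esub> a) \<circ> h) = {g \<in> carrier G. h g \<in> N}"
proof -
  have N: "subgroup N H"
    using normal_imp_subgroup[OF assms] .
  have "N #>\<^bsub>H\<^esub> h g = N \<longleftrightarrow> h g \<in> N" if "g \<in> carrier G" for g
    using H.coset_join1[OF _ _ N] H.coset_join2[OF _ N] that by auto
  then show ?thesis
    by (auto simp: kernel_def)
qed

lemma simple_quotient_surj_image:
  assumes hom: "group_hom G A h" and surj: "h ` carrier G = carrier A"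
    and M: "M \<lhd> G" and simple: "simple_group (G Mod M)" and proper: "h ` M \<noteq> carrier A"
  shows "h ` M \<lhd> A" "G Mod M \<cong> A Mod (h ` M)"
proof -
  interpret h: group_hom G A h
    by (rule hom)
  interpret M: normal M G
    by (rule M)
  show hM: "h ` M \<lhd> A"
    by (rule M.surj_hom_normal_subgroup[OF hom surj])
  interpret hM: normal "h ` M" A
    by (rule hM)
  define q where "q = (\<lambda>a. h ` M #>\<^bsub>A\<^esub> a) \<circ> h"
  have q: "group_hom G (A Mod h ` M) q"
    unfolding group_hom_def group_hom_axioms_def q_def
    by (intro conjI h.G.is_group hM.factorgroup_is_group hom_compose[OF h.homh hM.r_coset_hom_Mod])
  have q_surj: "q ` carrier G = carrier (A Mod h ` M)"
    unfolding q_def image_comp[symmetric] surj by (simp add: carrier_FactGroup)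
  have kernel: "kernel G (A Mod h ` M) q = {g \<in> carrier G. h g \<in> h ` M}"
    unfolding q_def by (rule h.kernel_comp_quotient_map[OF hM])
  have "kernel G (A Mod h ` M) q \<noteq> carrier G"
    using proper hM.subset unfolding kernel surj[symmetric] by blast
  moreover have "M \<subseteq> kernel G (A Mod h ` M) q"
    using M.subset unfolding kernel by blast
  ultimately have "kernel G (A Mod h ` M) q = M"
    using h.G.simple_quotient_maximal[OF M group_hom.normal_kernel[OF q] _ simple] by blast
  then show "G Mod M \<cong> A Mod (h ` M)"
    using group_hom.FactGroup_iso[OF q q_surj] by simp
qed

section \<open>Descending chains indexed by a well-order\<close>

lemma osucc_greater: "\<alpha> < \<gamma> \<Longrightarrow> \<alpha> < osucc \<alpha>"
  unfolding osucc_def by (rule LeastI)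

lemma osucc_least: "\<alpha> < \<gamma> \<Longrightarrow> osucc \<alpha> \<le> \<gamma>"
  unfolding osucc_def by (rule Least_le)

lemma wellorder_bot_succ_limit_cases:
  fixes \<beta> :: "'i::wellorder"
  obtains (bot) "\<forall>\<gamma>. \<not> \<gamma> < \<beta>" | (succ) \<gamma> where "\<gamma> < \<beta>" "\<beta> = osucc \<gamma>" | (limit) "is_limit \<beta>"
proof -
  consider "\<forall>\<gamma>. \<not> \<gamma> < \<beta>" | "is_limit \<beta>" | \<gamma> where "\<gamma> < \<beta>" "\<And>\<delta>. \<gamma> < \<delta> \<Longrightarrow> \<not> \<delta> < \<beta>"
    unfolding is_limit_def by blast
  then show ?thesis
  proof cases
    case (3 \<gamma>)
    then have "\<not> osucc \<gamma> < \<beta>"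
      using osucc_greater by blast
    then have "\<beta> = osucc \<gamma>"
      using osucc_least[OF 3(1)] by (simp add: order_le_less)
    then show ?thesis
      using succ 3(1) by blast
  qed (use bot limit in blast)+
qed

definition jumps :: "('i::wellorder \<Rightarrow> 'b) \<Rightarrow> 'i \<Rightarrow> 'i set" where
  "jumps K \<mu> = {\<alpha>. \<alpha> < \<mu> \<and> K \<alpha> \<noteq> K (osucc \<alpha>)}"

lemma constant_between_jumps:
  fixes K :: "'i::wellorder \<Rightarrow> 'b set"
  assumes antimono: "\<And>\<alpha> \<beta>. \<alpha> \<le> \<beta> \<Longrightarrow> \<beta> \<le> \<mu> \<Longrightarrow> K \<beta> \<subseteq> K \<alpha>"
    and continuous: "\<And>\<beta>. \<beta> \<le> \<mu> \<Longrightarrow> is_limit \<beta> \<Longrightarrow> (\<Inter>\<delta>\<in>{..<\<beta>}. K \<delta>) \<subseteq> K \<beta>"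
    and "\<alpha> \<le> \<beta>" "\<beta> \<le> \<mu>" and "\<And>\<gamma>. \<alpha> \<le> \<gamma> \<Longrightarrow> \<gamma> < \<beta> \<Longrightarrow> \<gamma> \<notin> jumps K \<mu>"
  shows "K \<beta> = K \<alpha>"
  using assms(3-)
proof (induction \<beta> rule: less_induct)
  case (less \<beta>)
  show ?case
  proof (cases "\<beta> = \<alpha>")
    case False
    then have "\<alpha> < \<beta>"
      using less.prems(1) by simp
    then show ?thesis
    proof (cases \<beta> rule: wellorder_bot_succ_limit_cases)
      case (succ \<gamma>)
      have "\<alpha> \<le> \<gamma>"
        using osucc_least[of \<gamma> \<alpha>] succ \<open>\<alpha> < \<beta>\<close> by (metis leI leD)
      moreover have "\<gamma> < \<mu>"
        using succ less.prems(2) by simp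
      ultimately have "K (osucc \<gamma>) = K \<gamma>"
        using less.prems(3) succ(1) unfolding jumps_def by auto
      moreover have "K \<gamma> = K \<alpha>"
        using less.IH[OF succ(1) \<open>\<alpha> \<le> \<gamma>\<close>] \<open>\<gamma> < \<mu>\<close> less.prems(3) succ(1) by simp
      ultimately show ?thesis
        using succ(2) by simp
    next
      case limit
      have "K \<alpha> \<subseteq> K \<delta>" if "\<delta> < \<beta>" for \<delta>
      proof (cases "\<alpha> \<le> \<delta>")
        case True
        then show ?thesis
          using less.IH[OF that True] that less.prems(2,3) by simp
      qed (use antimono[of \<delta> \<alpha>] that less.prems(2) \<open>\<alpha> < \<beta>\<close> in simp)
      then have "K \<alpha> \<subseteq> K \<beta>"
        using continuous[OF less.prems(2) limit] by blast
      then show ?thesis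
        using antimono less.prems(1,2) by blast
    qed (use \<open>\<alpha> < \<beta>\<close> in blast)
  qed simp
qed

lemma finite_jumps:
  fixes K :: "'i::wellorder \<Rightarrow> 'b set"
  assumes antimono: "\<And>\<alpha> \<beta>. \<alpha> \<le> \<beta> \<Longrightarrow> \<beta> \<le> \<mu> \<Longrightarrow> K \<beta> \<subseteq> K \<alpha>"
    and bounded: "\<And>\<alpha>. \<alpha> \<le> \<mu> \<Longrightarrow> K \<alpha> \<subseteq> X" and "finite X"
  shows "finite (jumps K \<mu>)"
proof -
  have osucc_le: "osucc \<alpha> \<le> \<mu>" if "\<alpha> \<in> jumps K \<mu>" for \<alpha>
    using that osucc_least unfolding jumps_def by blast
  have distinct: "K (osucc \<alpha>) \<noteq> K (osucc \<alpha>')"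
    if "\<alpha> \<in> jumps K \<mu>" "\<alpha>' \<in> jumps K \<mu>" "\<alpha> < \<alpha>'" for \<alpha> \<alpha>'
  proof
    assume eq: "K (osucc \<alpha>) = K (osucc \<alpha>')"
    have "K \<alpha>' \<subseteq> K (osucc \<alpha>)"
      using antimono osucc_least[OF that(3)] that(2) unfolding jumps_def by (simp add: less_imp_le)
    moreover have "K (osucc \<alpha>') \<subseteq> K \<alpha>'"
      using antimono osucc_greater[OF that(3)] osucc_le[OF that(2)] osucc_greater[of \<alpha>' \<mu>] that(2)
      unfolding jumps_def by (simp add: less_imp_le)
    ultimately show False
      using eq that(2) unfolding jumps_def by blast
  qed
  have "inj_on (\<lambda>\<alpha>. K (osucc \<alpha>)) (jumps K \<mu>)"
  proof (rule inj_onI)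
    fix \<alpha> \<alpha>' assume "\<alpha> \<in> jumps K \<mu>" "\<alpha>' \<in> jumps K \<mu>" "K (osucc \<alpha>) = K (osucc \<alpha>')"
    then show "\<alpha> = \<alpha>'"
      using distinct by (cases \<alpha> \<alpha>' rule: linorder_cases) fastforce+
  qed
  moreover have "(\<lambda>\<alpha>. K (osucc \<alpha>)) ` jumps K \<mu> \<subseteq> Pow X"
    using bounded osucc_le by blast
  then have "finite ((\<lambda>\<alpha>. K (osucc \<alpha>)) ` jumps K \<mu>)"
    using \<open>finite X\<close> finite_subset by blast
  ultimately show ?thesis
    using finite_imageD by blast
qed

definition jump_enum :: "'i::linorder set \<Rightarrow> 'i \<Rightarrow> nat \<Rightarrow> 'i" where
  "jump_enum J \<mu> i = (if i < card J then sorted_list_of_set J ! i else \<mu>)"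

lemma jump_enum_in: "i < card J \<Longrightarrow> jump_enum J \<mu> i \<in> J"
  unfolding jump_enum_def by (metis card.infinite length_sorted_list_of_set less_zeroE nth_mem
    set_sorted_list_of_set)

lemma jump_enum_image:
  assumes "finite J"
  shows "jump_enum J \<mu> ` {..<card J} = J"
proof -
  have "jump_enum J \<mu> ` {..<card J} = (!) (sorted_list_of_set J) ` {..<length (sorted_list_of_set J)}"
    unfolding jump_enum_def by (intro image_cong) auto
  also have "\<dots> = set (sorted_list_of_set J)"
    by (auto simp: set_conv_nth)
  finally show ?thesis
    using assms by simp
qed

lemma inj_on_jump_enum: "inj_on (jump_enum J \<mu>) {..<card J}"
  unfolding jump_enum_def inj_on_def
  by (metis (no_types, lifting) distinct_sorted_list_of_set length_sorted_list_of_set lessThan_iff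
    nth_eq_iff_index_eq)

lemma jump_enum_le: "\<forall>\<gamma>\<in>J. \<gamma> < \<mu> \<Longrightarrow> jump_enum J \<mu> i \<le> \<mu>"
  using jump_enum_in[of i J \<mu>] by (cases "i < card J") (auto simp: jump_enum_def less_imp_le)

lemma jump_enum_first_le:
  assumes "finite J" "\<gamma> \<in> J"
  shows "jump_enum J \<mu> 0 \<le> \<gamma>"
proof -
  have "0 < card J"
    using assms card_gt_0_iff by blast
  moreover obtain k where "k < card J" "\<gamma> = sorted_list_of_set J ! k"
    using assms by (metis in_set_conv_nth length_sorted_list_of_set set_sorted_list_of_set)
  ultimately show ?thesis
    unfolding jump_enum_def by (simp add: sorted_nth_mono)
qed

lemma jump_enum_next_le:
  assumes "finite J" "\<gamma> \<in> J" "i < card J" "jump_enum J \<mu> i < \<gamma>"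
  shows "jump_enum J \<mu> (Suc i) \<le> \<gamma>"
proof -
  define xs where "xs = sorted_list_of_set J"
  obtain k where k: "k < card J" "\<gamma> = xs ! k"
    using assms(1,2) unfolding xs_def by (metis in_set_conv_nth length_sorted_list_of_set set_sorted_list_of_set)
  have sorted: "sorted xs" "length xs = card J"
    unfolding xs_def by simp_all
  have "xs ! i < xs ! k"
    using assms(3,4) k(2) unfolding jump_enum_def xs_def by simp
  have "i < k"
  proof (rule ccontr)
    assume "\<not> i < k"
    then have "xs ! k \<le> xs ! i"
      using sorted_nth_mono[OF sorted(1), of k i] assms(3) sorted(2) by simp
    then show False
      using \<open>xs ! i < xs ! k\<close> by simp
  qed
  then show ?thesis
    using sorted_nth_mono[OF sorted(1), of "Suc i" k] k sorted(2) unfolding jump_enum_def xs_def by simp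
qed

lemma jump_enum_less_next:
  assumes "finite J" "\<forall>\<gamma>\<in>J. \<gamma> < \<mu>" "i < card J"
  shows "jump_enum J \<mu> i < jump_enum J \<mu> (Suc i)"
proof (cases "Suc i < card J")
  case True
  then show ?thesis
    using sorted_wrt_nth_less[OF strict_sorted_list_of_set, of i "Suc i" J] assms(1)
    unfolding jump_enum_def by simp
next
  case False
  have "jump_enum J \<mu> i \<in> J"
    using jump_enum_in[OF assms(3)] .
  then show ?thesis
    using assms(2) False by (simp add: jump_enum_def)
qed

section \<open>Composition series of a profinite group and its finite quotients\<close>

lemma finite_card_eq_iff_greatest:
  fixes F :: "'a set" and C :: "nat set"
  assumes below: "\<And>k. k \<in> C \<Longrightarrow> \<exists>F'. F' \<subseteq> F \<and> finite F' \<and> card F' = k"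
    and above: "\<And>F\<^sub>0. F\<^sub>0 \<subseteq> F \<Longrightarrow> finite F\<^sub>0 \<Longrightarrow> \<exists>F'. F\<^sub>0 \<subseteq> F' \<and> F' \<subseteq> F \<and> finite F' \<and> card F' \<in> C"
  shows "(finite F \<and> card F = n) \<longleftrightarrow> (n \<in> C \<and> (\<forall>k\<in>C. k \<le> n))"
proof -
  have in_C: "card F \<in> C" if fin: "finite F"
  proof -
    obtain F' where "F \<subseteq> F'" "F' \<subseteq> F" "card F' \<in> C"
      using above[OF subset_refl fin] by blast
    then show ?thesis
      by (metis subset_antisym)
  qed
  have le: "k \<le> card F" if fin: "finite F" and k: "k \<in> C" for k
  proof -
    obtain F' where "F' \<subseteq> F" "card F' = k"
      using below[OF k] by blast
    then show ?thesis
      using card_mono[OF fin] by blast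
  qed
  have finite: "finite F" if bound: "\<forall>k\<in>C. k \<le> n"
  proof (rule ccontr)
    assume "infinite F"
    then obtain F\<^sub>0 where F\<^sub>0: "F\<^sub>0 \<subseteq> F" "finite F\<^sub>0" "card F\<^sub>0 = Suc n"
      using infinite_arbitrarily_large by blast
    then obtain F' where F': "F\<^sub>0 \<subseteq> F'" "finite F'" "card F' \<in> C"
      using above by blast
    have "Suc n \<le> card F'"
      using card_mono[OF F'(2,1)] F\<^sub>0(3) by simp
    moreover have "card F' \<le> n"
      using bound F'(3) by blast
    ultimately show False
      by simp
  qed
  show ?thesis
  proof
    assume "finite F \<and> card F = n"
    then show "n \<in> C \<and> (\<forall>k\<in>C. k \<le> n)"
      using in_C le by blast
  next
    assume "n \<in> C \<and> (\<forall>k\<in>C. k \<le> n)"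
    then have "finite F" "card F \<le> n" "n \<le> card F"
      using finite in_C le by blast+
    then show "finite F \<and> card F = n"
      by simp
  qed
qed

locale profinite_composition_series = profinite +
  fixes Gs :: "'i::wellorder \<Rightarrow> 'a set" and \<mu> :: 'i
  assumes composition_series: "composition_series G T Gs \<mu>"
begin

lemma series_bot: "\<forall>\<beta>. \<not> \<beta> < \<alpha> \<Longrightarrow> \<alpha> \<le> \<mu> \<Longrightarrow> Gs \<alpha> = carrier G"
  using composition_series unfolding composition_series_def accessible_series_def by auto

lemma series_top: "Gs \<mu> = {\<one>}"
  using composition_series unfolding composition_series_def accessible_series_def by auto

lemma series_subgroup: "\<alpha> \<le> \<mu> \<Longrightarrow> subgroup (Gs \<alpha>) G"
  using composition_series unfolding composition_series_def accessible_series_def by auto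

lemma series_subset_carrier: "\<alpha> \<le> \<mu> \<Longrightarrow> Gs \<alpha> \<subseteq> carrier G"
  using series_subgroup subgroup.subset by blast

lemma series_closedin: "\<alpha> \<le> \<mu> \<Longrightarrow> closedin T (Gs \<alpha>)"
  using composition_series unfolding composition_series_def accessible_series_def by auto

lemma series_antimono: "\<alpha> \<le> \<beta> \<Longrightarrow> \<beta> \<le> \<mu> \<Longrightarrow> Gs \<beta> \<subseteq> Gs \<alpha>"
  using composition_series unfolding composition_series_def accessible_series_def by auto

lemma series_normal_succ: "\<alpha> < \<mu> \<Longrightarrow> Gs (osucc \<alpha>) \<lhd> G\<lparr>carrier := Gs \<alpha>\<rparr>"
  using composition_series unfolding composition_series_def accessible_series_def by auto

lemma series_limit: "\<alpha> \<le> \<mu> \<Longrightarrow> is_limit \<alpha> \<Longrightarrow> Gs \<alpha> = (\<Inter>\<beta>\<in>{..<\<alpha>}. Gs \<beta>)"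
  using composition_series unfolding composition_series_def accessible_series_def by auto

lemma series_factor_simple: "\<alpha> < \<mu> \<Longrightarrow> simple_group (series_factor G Gs \<alpha>)"
  using composition_series unfolding composition_series_def by auto

lemma series_factor_nontrivial:
  assumes "\<alpha> < \<mu>"
  obtains x where "x \<in> Gs \<alpha>" "x \<notin> Gs (osucc \<alpha>)"
proof -
  have "group (G\<lparr>carrier := Gs \<alpha>\<rparr>)"
    using series_subgroup assms subgroup_imp_group by simp
  then have "Gs (osucc \<alpha>) \<noteq> Gs \<alpha>"
    using group.simple_quotient_proper series_factor_simple[OF assms] unfolding series_factor_def
    by fastforce
  moreover have "Gs (osucc \<alpha>) \<subseteq> Gs \<alpha>"
    using series_antimono osucc_greater[OF assms] osucc_least[OF assms] by (simp add: less_imp_le)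
  ultimately show ?thesis
    using that by blast
qed

end

definition image_series :: "'a monoid \<Rightarrow> ('i \<Rightarrow> 'a set) \<Rightarrow> 'a set \<Rightarrow> 'i \<Rightarrow> 'a set set" where
  "image_series G Gs N \<alpha> = (\<lambda>g. N #>\<^bsub>G\<^esub> g) ` Gs \<alpha>"

locale series_quotient = profinite_composition_series +
  fixes N :: "'a set"
  assumes N_normal: "N \<lhd> G" and N_closedin: "closedin T N"
    and finite_quotient: "finite (carrier (G Mod N))"
begin

abbreviation "K \<equiv> image_series G Gs N"
abbreviation "J \<equiv> jumps K \<mu>"
abbreviation "jump_at \<equiv> jump_enum J \<mu>"

lemma N_subgroup: "subgroup N G"
  using N_normal normal_imp_subgroup by blast

lemma image_series_subset_carrier: "\<alpha> \<le> \<mu> \<Longrightarrow> K \<alpha> \<subseteq> carrier (G Mod N)"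
  using series_subset_carrier unfolding image_series_def carrier_FactGroup by blast

lemma image_series_antimono: "\<alpha> \<le> \<beta> \<Longrightarrow> \<beta> \<le> \<mu> \<Longrightarrow> K \<beta> \<subseteq> K \<alpha>"
  unfolding image_series_def using series_antimono by blast

lemma image_series_bot: "\<forall>\<beta>. \<not> \<beta> < \<alpha> \<Longrightarrow> \<alpha> \<le> \<mu> \<Longrightarrow> K \<alpha> = carrier (G Mod N)"
  unfolding image_series_def carrier_FactGroup using series_bot by simp

lemma image_series_top: "K \<mu> = {\<one>\<^bsub>G Mod N\<^esub>}"
  unfolding image_series_def series_top using N_subgroup subgroup.subset by force

lemma quotient_map_hom: "group_hom G (G Mod N) (\<lambda>g. N #> g)"
  unfolding group_hom_def group_hom_axioms_def
  using is_group normal.factorgroup_is_group[OF N_normal] normal.r_coset_hom_Mod[OF N_normal] by blast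

lemma image_series_subgroup: "\<alpha> \<le> \<mu> \<Longrightarrow> subgroup (K \<alpha>) (G Mod N)"
  unfolding image_series_def by (rule group_hom.subgroup_img_is_subgroup[OF quotient_map_hom series_subgroup])

lemma image_series_continuous:
  assumes \<beta>: "\<beta> \<le> \<mu>" "is_limit \<beta>"
  shows "(\<Inter>\<delta>\<in>{..<\<beta>}. K \<delta>) \<subseteq> K \<beta>"
proof
  fix C assume C: "C \<in> (\<Inter>\<delta>\<in>{..<\<beta>}. K \<delta>)"
  obtain \<delta>\<^sub>0 where "\<delta>\<^sub>0 < \<beta>"
    using \<beta>(2) unfolding is_limit_def by blast
  then obtain x where x: "x \<in> Gs \<delta>\<^sub>0" "C = N #> x"
    using C unfolding image_series_def by blast
  have "\<delta>\<^sub>0 \<le> \<mu>"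
    using \<open>\<delta>\<^sub>0 < \<beta>\<close> \<beta>(1) by simp
  then have xc: "x \<in> carrier G"
    using x(1) series_subset_carrier by blast
  have "(\<Inter>\<delta>\<in>{..<\<beta>}. Gs \<delta> \<inter> (N #> x)) \<noteq> {}"
  proof (rule compact_space_Inter_chain_nonempty[OF compact])
    fix \<delta> assume "\<delta> \<in> {..<\<beta>}"
    then have \<delta>: "\<delta> \<le> \<mu>" "C \<in> K \<delta>"
      using \<beta>(1) C by auto
    show "closedin T (Gs \<delta> \<inter> (N #> x))"
      using series_closedin[OF \<delta>(1)] closedin_r_coset[OF N_closedin xc] by blast
    obtain g where g: "g \<in> Gs \<delta>" "C = N #> g"
      using \<delta>(2) unfolding image_series_def by blast
    then have "g \<in> N #> x"
      using rcos_self[OF _ N_subgroup] series_subset_carrier[OF \<delta>(1)] x(2) by blast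
    then show "Gs \<delta> \<inter> (N #> x) \<noteq> {}"
      using g(1) by blast
  next
    fix \<delta> \<delta>' assume "\<delta> \<in> {..<\<beta>}" "\<delta>' \<in> {..<\<beta>}" "\<delta> \<le> \<delta>'"
    then have "Gs \<delta>' \<subseteq> Gs \<delta>"
      using series_antimono \<beta>(1) by simp
    then show "Gs \<delta>' \<inter> (N #> x) \<subseteq> Gs \<delta> \<inter> (N #> x)"
      by blast
  qed
  then obtain y where y: "\<And>\<delta>. \<delta> < \<beta> \<Longrightarrow> y \<in> Gs \<delta>" "y \<in> N #> x"
    using \<open>\<delta>\<^sub>0 < \<beta>\<close> by blast
  have "y \<in> Gs \<beta>"
    using series_limit[OF \<beta>] y(1) by blast
  moreover have "C = N #> y"
    using repr_independence[OF y(2) xc N_subgroup] x(2) by simp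
  ultimately show "C \<in> K \<beta>"
    unfolding image_series_def by blast
qed

lemma image_series_constant:
  assumes "\<alpha> \<le> \<beta>" "\<beta> \<le> \<mu>" "\<And>\<gamma>. \<alpha> \<le> \<gamma> \<Longrightarrow> \<gamma> < \<beta> \<Longrightarrow> \<gamma> \<notin> jumps K \<mu>"
  shows "K \<beta> = K \<alpha>"
  using constant_between_jumps[OF image_series_antimono image_series_continuous assms] .

lemma finite_jumps_image_series: "finite (jumps K \<mu>)"
  using finite_jumps[OF image_series_antimono image_series_subset_carrier finite_quotient] .

lemma quotient_map_hom_restrict:
  assumes "\<alpha> \<le> \<mu>"
  shows "group_hom (G\<lparr>carrier := Gs \<alpha>\<rparr>) ((G Mod N)\<lparr>carrier := K \<alpha>\<rparr>) (\<lambda>g. N #> g)"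
proof -
  have "(\<lambda>g. N #> g) \<in> hom (G\<lparr>carrier := Gs \<alpha>\<rparr>) ((G Mod N)\<lparr>carrier := K \<alpha>\<rparr>)"
    using group_hom.homh[OF quotient_map_hom] series_subset_carrier[OF assms]
    unfolding hom_def image_series_def by (auto simp: subset_eq)
  then show ?thesis
    unfolding group_hom_def group_hom_axioms_def
    using subgroup_imp_group[OF series_subgroup[OF assms]]
      group.subgroup_imp_group[OF normal.factorgroup_is_group[OF N_normal] image_series_subgroup[OF assms]]
    by blast
qed

lemma jump_factor:
  assumes "\<alpha> \<in> jumps K \<mu>"
  shows "K (osucc \<alpha>) \<lhd> (G Mod N)\<lparr>carrier := K \<alpha>\<rparr>"
    and "series_factor G Gs \<alpha> \<cong> ((G Mod N)\<lparr>carrier := K \<alpha>\<rparr>) Mod K (osucc \<alpha>)"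
proof -
  have \<alpha>: "\<alpha> < \<mu>" "\<alpha> \<le> \<mu>" "K (osucc \<alpha>) \<noteq> K \<alpha>"
    using assms unfolding jumps_def by auto
  have surj: "(\<lambda>g. N #> g) ` carrier (G\<lparr>carrier := Gs \<alpha>\<rparr>) = carrier ((G Mod N)\<lparr>carrier := K \<alpha>\<rparr>)"
    by (simp add: image_series_def)
  have image: "(\<lambda>g. N #> g) ` Gs (osucc \<alpha>) = K (osucc \<alpha>)"
    by (simp add: image_series_def)
  note quotient = simple_quotient_surj_image[OF quotient_map_hom_restrict[OF \<alpha>(2)] surj
      series_normal_succ[OF \<alpha>(1)] series_factor_simple[OF \<alpha>(1), unfolded series_factor_def]]
  show "K (osucc \<alpha>) \<lhd> (G Mod N)\<lparr>carrier := K \<alpha>\<rparr>"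
    using quotient(1) \<alpha>(3) unfolding image by simp
  show "series_factor G Gs \<alpha> \<cong> ((G Mod N)\<lparr>carrier := K \<alpha>\<rparr>) Mod K (osucc \<alpha>)"
    using quotient(2) \<alpha>(3) unfolding image series_factor_def by simp
qed

lemma jump_if_coset_avoids:
  assumes \<alpha>: "\<alpha> < \<mu>" and x: "x \<in> Gs \<alpha>" and avoid: "\<And>n. n \<in> N \<Longrightarrow> n \<otimes> x \<notin> Gs (osucc \<alpha>)"
  shows "\<alpha> \<in> jumps K \<mu>"
proof -
  have "N #> x \<notin> K (osucc \<alpha>)"
  proof
    assume "N #> x \<in> K (osucc \<alpha>)"
    then obtain g where g: "g \<in> Gs (osucc \<alpha>)" "N #> x = N #> g"
      unfolding image_series_def by blast
    have "g \<in> carrier G"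
      using g(1) series_subset_carrier osucc_least[OF \<alpha>] by blast
    then have "g \<in> N #> x"
      using rcos_self[OF _ N_subgroup] g(2) by simp
    then obtain n where "n \<in> N" "g = n \<otimes> x"
      unfolding r_coset_def by blast
    then show False
      using avoid g(1) by blast
  qed
  moreover have "N #> x \<in> K \<alpha>"
    using x unfolding image_series_def by blast
  ultimately show ?thesis
    using \<alpha> unfolding jumps_def by blast
qed

lemma jumps_less: "\<forall>\<gamma>\<in>J. \<gamma> < \<mu>"
  unfolding jumps_def by blast

lemma image_series_first_jump: "K (jump_at 0) = carrier (G Mod N)"
proof -
  define b where "b = (LEAST x. x \<le> \<mu>)"
  have b: "b \<le> \<mu>"
    unfolding b_def by (rule LeastI[of _ \<mu>]) simp
  have bot: "\<not> \<beta> < b" for \<beta>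
  proof
    assume "\<beta> < b"
    then have "\<not> \<beta> \<le> \<mu>"
      unfolding b_def by (rule not_less_Least)
    then show False
      using \<open>\<beta> < b\<close> b by simp
  qed
  have "K (jump_at 0) = K b"
  proof (rule image_series_constant)
    show "b \<le> jump_at 0"
      using bot[of "jump_at 0"] by (simp add: not_less)
    show "jump_at 0 \<le> \<mu>"
      using jump_enum_le[OF jumps_less] .
    show "\<gamma> \<notin> J" if "\<gamma> < jump_at 0" for \<gamma>
    proof
      assume "\<gamma> \<in> J"
      then have "jump_at 0 \<le> \<gamma>"
        by (rule jump_enum_first_le[OF finite_jumps_image_series])
      then show False
        using that by simp
    qed
  qed
  then show ?thesis
    using image_series_bot bot b by simp
qed

lemma image_series_next_jump:
  assumes i: "i < card J"
  shows "K (jump_at (Suc i)) = K (osucc (jump_at i))"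
proof (rule image_series_constant)
  have "jump_at i < jump_at (Suc i)"
    using jump_enum_less_next[OF finite_jumps_image_series jumps_less i] .
  then show "osucc (jump_at i) \<le> jump_at (Suc i)"
    by (rule osucc_least)
  show "jump_at (Suc i) \<le> \<mu>"
    using jump_enum_le[OF jumps_less] .
  show "\<gamma> \<notin> J" if "osucc (jump_at i) \<le> \<gamma>" "\<gamma> < jump_at (Suc i)" for \<gamma>
  proof
    assume "\<gamma> \<in> J"
    moreover have "jump_at i < \<gamma>"
      using that(1) osucc_greater[OF \<open>jump_at i < jump_at (Suc i)\<close>] by simp
    ultimately have "jump_at (Suc i) \<le> \<gamma>"
      using jump_enum_next_le[OF finite_jumps_image_series _ i] by blast
    then show False
      using that(2) by simp
  qed
qed

lemma quotient_factor_iso: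
  assumes i: "i < card J"
  shows "K (jump_at (Suc i)) \<lhd> (G Mod N)\<lparr>carrier := K (jump_at i)\<rparr>"
    and "series_factor G Gs (jump_at i) \<cong> ((G Mod N)\<lparr>carrier := K (jump_at i)\<rparr>) Mod K (jump_at (Suc i))"
  using jump_factor[OF jump_enum_in[OF i]] image_series_next_jump[OF i] by simp_all

lemma quotient_composition_series:
  "finite_composition_series (G Mod N) (\<lambda>i. K (jump_at i)) (card J)"
  unfolding finite_composition_series_def
proof (intro conjI allI impI)
  show "K (jump_at 0) = carrier (G Mod N)"
    by (rule image_series_first_jump)
  show "K (jump_at (card J)) = {\<one>\<^bsub>G Mod N\<^esub>}"
    using image_series_top by (simp add: jump_enum_def)
  show "subgroup (K (jump_at i)) (G Mod N)" for i
    using image_series_subgroup jump_enum_le[OF jumps_less] by blast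
  fix i assume i: "i < card J"
  show "K (jump_at (Suc i)) \<lhd> (G Mod N)\<lparr>carrier := K (jump_at i)\<rparr>"
    using quotient_factor_iso(1)[OF i] .
  have "group (((G Mod N)\<lparr>carrier := K (jump_at i)\<rparr>) Mod K (jump_at (Suc i)))"
    using quotient_factor_iso(1)[OF i] normal.factorgroup_is_group by blast
  then show "simple_group (((G Mod N)\<lparr>carrier := K (jump_at i)\<rparr>) Mod K (jump_at (Suc i)))"
    using simple_group_iso series_factor_simple jump_enum_in[OF i] quotient_factor_iso(2)[OF i] jumps_less
    by blast
qed

lemma quotient_iso_factor_count:
  "iso_factor_count (G Mod N) (\<lambda>i. K (jump_at i)) (card J) S = card {\<alpha> \<in> J. series_factor G Gs \<alpha> \<cong> S}"
proof -
  have "((G Mod N)\<lparr>carrier := K (jump_at i)\<rparr>) Mod K (jump_at (Suc i)) \<cong> S \<longleftrightarrow>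
      series_factor G Gs (jump_at i) \<cong> S" if i: "i < card J" for i
  proof -
    have "group (series_factor G Gs (jump_at i))"
      using series_factor_simple jump_enum_in[OF i] jumps_less simple_group_def by blast
    moreover have "group (((G Mod N)\<lparr>carrier := K (jump_at i)\<rparr>) Mod K (jump_at (Suc i)))"
      using quotient_factor_iso(1)[OF i] normal.factorgroup_is_group by blast
    ultimately show ?thesis
      by (simp add: iso_trans_iff[OF _ _ quotient_factor_iso(2)[OF i]])
  qed
  then have "{i. i < card J \<and> ((G Mod N)\<lparr>carrier := K (jump_at i)\<rparr>) Mod K (jump_at (Suc i)) \<cong> S}
      = {i \<in> {..<card J}. series_factor G Gs (jump_at i) \<cong> S}"
    by auto
  then have "iso_factor_count (G Mod N) (\<lambda>i. K (jump_at i)) (card J) S =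
      card {i \<in> {..<card J}. series_factor G Gs (jump_at i) \<cong> S}"
    unfolding iso_factor_count_def by simp
  also have "\<dots> = card (jump_at ` {i \<in> {..<card J}. series_factor G Gs (jump_at i) \<cong> S})"
    by (intro card_image[symmetric] inj_on_subset[OF inj_on_jump_enum]) blast
  also have "jump_at ` {i \<in> {..<card J}. series_factor G Gs (jump_at i) \<cong> S} =
      {\<alpha> \<in> jump_at ` {..<card J}. series_factor G Gs \<alpha> \<cong> S}"
    by blast
  also have "\<dots> = {\<alpha> \<in> J. series_factor G Gs \<alpha> \<cong> S}"
    using jump_enum_image[OF finite_jumps_image_series] by simp
  finally show ?thesis .
qed

end

context profinite_composition_series
begin

lemma quotient_comp_factor_count_iff:
  assumes N: "N \<lhd> G" "closedin T N" "finite (carrier (G Mod N))"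
  shows "comp_factor_count (G Mod N) S k \<longleftrightarrow>
    k = card {\<alpha> \<in> jumps (image_series G Gs N) \<mu>. series_factor G Gs \<alpha> \<cong> S}"
proof -
  interpret series_quotient G T Gs \<mu> N
    using N by intro_locales (simp add: series_quotient_axioms_def)
  have "iso_factor_count (G Mod N) cs m S = card {\<alpha> \<in> J. series_factor G Gs \<alpha> \<cong> S}"
    if "finite_composition_series (G Mod N) cs m" for cs m
    by (rule trans[OF iso_factor_count_unique[OF normal.factorgroup_is_group[OF N(1)] N(3) that
          quotient_composition_series] quotient_iso_factor_count])
  then show ?thesis
    unfolding comp_factor_count_iff using quotient_composition_series quotient_iso_factor_count by metis
qed

lemma exists_quotient_with_jumps:
  assumes F: "finite F" "\<forall>\<alpha>\<in>F. \<alpha> < \<mu>"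
  obtains N where "N \<lhd> G" "closedin T N" "finite (carrier (G Mod N))"
    "F \<subseteq> jumps (image_series G Gs N) \<mu>"
proof -
  have "\<forall>\<alpha>\<in>F. \<exists>x. x \<in> Gs \<alpha> \<and> x \<notin> Gs (osucc \<alpha>)"
    using F(2) series_factor_nontrivial by metis
  then obtain x where x: "\<And>\<alpha>. \<alpha> \<in> F \<Longrightarrow> x \<alpha> \<in> Gs \<alpha> \<and> x \<alpha> \<notin> Gs (osucc \<alpha>)"
    by metis
  have xc: "x \<alpha> \<in> carrier G" if "\<alpha> \<in> F" for \<alpha>
    using x[OF that] series_subset_carrier F(2) that by (meson less_imp_le subsetD)
  define C where "C = (\<Union>\<alpha>\<in>F. {y \<in> topspace T. y \<otimes> x \<alpha> \<in> Gs (osucc \<alpha>)})"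
  have "closedin T C"
    unfolding C_def
  proof (intro closedin_Union finite_imageI F(1), clarify)
    fix \<alpha> assume "\<alpha> \<in> F"
    then have "closedin T (Gs (osucc \<alpha>))"
      using F(2) series_closedin osucc_least by blast
    then show "closedin T {y \<in> topspace T. y \<otimes> x \<alpha> \<in> Gs (osucc \<alpha>)}"
      by (rule closedin_continuous_map_preimage[OF continuous_map_mult_right[OF xc[OF \<open>\<alpha> \<in> F\<close>]]])
  qed
  moreover have "\<one> \<notin> C"
    unfolding C_def using x xc by auto
  ultimately obtain N where N: "N \<lhd> G" "openin T N" "N \<inter> C = {}"
    using open_normal_subgroup_disjoint_closedin by blast
  have "\<alpha> \<in> jumps (image_series G Gs N) \<mu>" if \<alpha>: "\<alpha> \<in> F" for \<alpha>
  proof -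
    interpret series_quotient G T Gs \<mu> N
      using N(1) closedin_finite_quotient_open_normal[OF N(1,2)]
      by intro_locales (simp add: series_quotient_axioms_def)
    have "n \<otimes> x \<alpha> \<notin> Gs (osucc \<alpha>)" if "n \<in> N" for n
      using that N(3) N_subgroup subgroup.subset \<alpha> unfolding C_def by fastforce
    then show ?thesis
      using jump_if_coset_avoids x \<alpha> F(2) by blast
  qed
  then show ?thesis
    using that N(1) closedin_finite_quotient_open_normal[OF N(1,2)] by blast
qed

lemma finite_jumps_quotient:
  assumes N: "N \<lhd> G" "closedin T N" "finite (carrier (G Mod N))"
  shows "finite (jumps (image_series G Gs N) \<mu>)"
proof -
  interpret series_quotient G T Gs \<mu> N
    using N by intro_locales (simp add: series_quotient_axioms_def)
  show ?thesis
    by (rule finite_jumps_image_series)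
qed

lemma finite_quotient_count_subset:
  assumes "k \<in> finite_quotient_counts G T S"
  shows "\<exists>F'. F' \<subseteq> {\<alpha>. \<alpha> < \<mu> \<and> series_factor G Gs \<alpha> \<cong> S} \<and> finite F' \<and> card F' = k"
proof -
  obtain N where N: "N \<lhd> G" "closedin T N" "finite (carrier (G Mod N))"
    and "comp_factor_count (G Mod N) S k"
    using assms unfolding finite_quotient_counts_def by blast
  define F' where "F' = {\<alpha> \<in> jumps (image_series G Gs N) \<mu>. series_factor G Gs \<alpha> \<cong> S}"
  have "card F' = k"
    using quotient_comp_factor_count_iff[OF N, THEN iffD1, OF \<open>comp_factor_count (G Mod N) S k\<close>]
    unfolding F'_def by simp
  moreover have "F' \<subseteq> {\<alpha>. \<alpha> < \<mu> \<and> series_factor G Gs \<alpha> \<cong> S}"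
    unfolding F'_def jumps_def by auto
  moreover have "finite F'"
    using finite_jumps_quotient[OF N] unfolding F'_def by simp
  ultimately show ?thesis
    by blast
qed

lemma finite_quotient_count_superset:
  assumes "F\<^sub>0 \<subseteq> {\<alpha>. \<alpha> < \<mu> \<and> series_factor G Gs \<alpha> \<cong> S}" "finite F\<^sub>0"
  shows "\<exists>F'. F\<^sub>0 \<subseteq> F' \<and> F' \<subseteq> {\<alpha>. \<alpha> < \<mu> \<and> series_factor G Gs \<alpha> \<cong> S} \<and> finite F' \<and>
    card F' \<in> finite_quotient_counts G T S"
proof -
  obtain N where N: "N \<lhd> G" "closedin T N" "finite (carrier (G Mod N))"
    and jumps: "F\<^sub>0 \<subseteq> jumps (image_series G Gs N) \<mu>"
    using exists_quotient_with_jumps assms by blast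
  define F' where "F' = {\<alpha> \<in> jumps (image_series G Gs N) \<mu>. series_factor G Gs \<alpha> \<cong> S}"
  have "comp_factor_count (G Mod N) S (card F')"
    unfolding F'_def by (rule quotient_comp_factor_count_iff[OF N, THEN iffD2, OF refl])
  then have "card F' \<in> finite_quotient_counts G T S"
    using N unfolding finite_quotient_counts_def by blast
  moreover have "F\<^sub>0 \<subseteq> F'" "F' \<subseteq> {\<alpha>. \<alpha> < \<mu> \<and> series_factor G Gs \<alpha> \<cong> S}"
    using assms(1) jumps unfolding F'_def jumps_def by auto
  moreover have "finite F'"
    using finite_jumps_quotient[OF N] unfolding F'_def by simp
  ultimately show ?thesis
    by blast
qed

end

theorem lemma1p7:
  fixes G :: "'a monoid" and T :: "'a topology"
    and Gs :: "'i::wellorder \<Rightarrow> 'a set" and \<mu> :: 'i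
    and S :: "'s monoid" and n :: nat
  assumes "profinite_group G T"
    and "composition_series G T Gs \<mu>"
    and "finite (carrier S)" and "simple_group S"
  shows "(finite {\<alpha>. \<alpha> < \<mu> \<and> series_factor G Gs \<alpha> \<cong> S} \<and>
          card {\<alpha>. \<alpha> < \<mu> \<and> series_factor G Gs \<alpha> \<cong> S} = n)
     \<longleftrightarrow> (n \<in> finite_quotient_counts G T S \<and> (\<forall>k\<in>finite_quotient_counts G T S. k \<le> n))"
proof -
  interpret profinite_composition_series G T Gs \<mu>
    by (intro profinite_composition_series.intro profinite_composition_series_axioms.intro
        profinite_group_imp_profinite assms(1,2))
  show ?thesis
    by (rule finite_card_eq_iff_greatest[OF finite_quotient_count_subset finite_quotient_count_superset])
qed

end
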